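(* Consider the linear model $Y=A\alpha+B\beta+\varepsilon$ with $\mathbb{E}(\varepsilon)=0$, $\mathrm{Var}(\varepsilon)=\sigma^2I$, and let $K$ be a matrix with as many rows as $\alpha$ has entries. Then the information matrix $C[K'\alpha]$ for $K'\alpha$ satisfies $$C[K'\alpha]\le (K'K)^+K'\,C[\alpha]\,K(K'K)^+$$ in the Loewner order, with equality if and only if $C[\alpha]$ commutes with $\mathrm{pr}_{(K)}$.
   Context: $X^+$ denotes the Moore–Penrose inverse; $\mathrm{pr}_{(X)}=X(X'X)^+X'$ is the orthogonal projection onto the column space of $X$, and $\mathrm{pr}^\perp_{(X)}=I-\mathrm{pr}_{(X)}$. For symmetric $M,N$, $M\le N$ means $N-M$ is nonnegative definite. In a model $\mathbb{E}(Y)=X_1\theta_1+X_2\theta_2$, the information matrix for $\theta_1$ is $X_1'\mathrm{pr}^\perp_{(X_2)}X_1$; thus $C[\alpha]=A'\mathrm{pr}^\perp_{(B)}A$, and $C[K'\alpha]$ is the information matrix for $\theta_1=K'\alpha$ in the reparametrization $\mathbb{E}(Y)=AK(K'K)^+\,(K'\alpha)+AM\,(M\alpha)+B\beta$ with $M=I-K(K'K)^+K'$, i.e. $C[K'\alpha]=X_1'\mathrm{pr}^\perp_{(X_2)}X_1$ with $X_1=AK(K'K)^+$ and $X_2=(AM\mid B)$. *)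

theory Defs
  imports "HOL-Analysis.Analysis"
begin

text \<open>Moore--Penrose inverse, characterised by the four Penrose conditions
  (it exists and is unique for every real matrix).\<close>
definition mp_inverse :: "real^'m^'n \<Rightarrow> real^'n^'m" where
  "mp_inverse X = (THE G. X ** G ** X = X \<and> G ** X ** G = G \<and>
       transpose (X ** G) = X ** G \<and> transpose (G ** X) = G ** X)"

definition proj :: "real^'m^'n \<Rightarrow> real^'n^'n" where
  "proj X = X ** mp_inverse (transpose X ** X) ** transpose X"

definition proj_perp :: "real^'m^'n \<Rightarrow> real^'n^'n" where
  "proj_perp X = mat 1 - proj X"

definition nonneg_def :: "real^'n^'n \<Rightarrow> bool" where
  "nonneg_def M \<longleftrightarrow> (\<forall>x. 0 \<le> x \<bullet> (M *v x))"

definition loewner_le :: "real^'n^'n \<Rightarrow> real^'n^'n \<Rightarrow> bool" where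
  "loewner_le M N \<longleftrightarrow> nonneg_def (N - M)"

definition hcat :: "real^'a^'n \<Rightarrow> real^'b^'n \<Rightarrow> real^('a + 'b)^'n" where
  "hcat X Y = (\<chi> i j. case j of Inl a \<Rightarrow> X $ i $ a | Inr b \<Rightarrow> Y $ i $ b)"

text \<open>Information matrix for theta_1 in E(Y) = X1 theta_1 + X2 theta_2.\<close>
definition info_mat :: "real^'a^'n \<Rightarrow> real^'b^'n \<Rightarrow> real^'a^'a" where
  "info_mat X1 X2 = transpose X1 ** proj_perp X2 ** X1"

definition C_alpha :: "real^'p^'n \<Rightarrow> real^'q^'n \<Rightarrow> real^'p^'p" where
  "C_alpha A B = info_mat A B"

text \<open>C[K' alpha] via the reparametrisation
  E(Y) = A K (K'K)^+ (K' alpha) + A M (M alpha) + B beta, M = I - K(K'K)^+K'.\<close>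
definition C_Kalpha :: "real^'p^'n \<Rightarrow> real^'q^'n \<Rightarrow> real^'k^'p \<Rightarrow> real^'k^'k" where
  "C_Kalpha A B K =
     (let G = mp_inverse (transpose K ** K);
          M = mat 1 - K ** G ** transpose K
      in info_mat (A ** K ** G) (hcat (A ** M) B))"

end

theory Submission
  imports Defs
begin

text \<open>Both sides are information matrices for the same regressor X1 = A K (K'K)^+: the left
  one with nuisance regressor X2 = (AM | B), the right one (as (K'K)^+ is symmetric) with
  nuisance regressor B. Since the columns of B lie in the column space of X2, the difference
  D = pr_(X2) - pr_(B) is again an orthogonal projection, so the difference of the two
  information matrices is the Gram matrix (D X1)'(D X1). This gives the Loewner inequality, with
  equality iff D X1 = 0, i.e. iff X2' pr^perp_(B) X1 = 0. The B-block of this product vanishes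
  anyway and the AM-block is M C[alpha] K (K'K)^+. Dropping the factor (K'K)^+ and using the
  symmetry of C[alpha], the condition M C[alpha] K = 0 says exactly that C[alpha] commutes
  with pr_(K).

  The Moore--Penrose inverse, defined by a definite description, is shown to exist by
  building it from the orthogonal projections onto the row and column spaces.\<close>

lemma matrix_diff_ldistrib: "(A::'a::ring_1^'n^'m) ** (B - C) = A ** B - A ** C"
  by (simp add: matrix_matrix_mult_def vec_eq_iff algebra_simps sum_subtractf)

lemma matrix_diff_rdistrib: "((B::'a::ring_1^'n^'m) - C) ** A = B ** A - C ** A"
  by (simp add: matrix_matrix_mult_def vec_eq_iff algebra_simps sum_subtractf)

lemma transpose_diff: "transpose (A - B) = transpose A - transpose (B::'a::ab_group_add^'n^'m)"
  by (simp add: transpose_def vec_eq_iff)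

lemma transpose_eq_if_self_adjoint:
  fixes A :: "real^'n^'n"
  assumes "\<And>x y. x \<bullet> (A *v y) = (A *v x) \<bullet> y"
  shows "transpose A = A"
proof -
  have "transpose A *v x = A *v x" for x
  proof -
    have "(transpose A *v x - A *v x) \<bullet> y = 0" for y
      using assms by (simp add: inner_diff_left dot_lmul_matrix)
    then show ?thesis
      by (metis eq_iff_diff_eq_0 inner_eq_zero_iff)
  qed
  then show ?thesis by (simp add: matrix_eq)
qed

lemma inner_matrix_vector_symmetric:
  fixes P :: "real^'n^'n"
  assumes "transpose P = P"
  shows "u \<bullet> (P *v w) = (P *v u) \<bullet> w"
  by (metis assms dot_lmul_matrix transpose_matrix_vector)

lemma inner_gram: "x \<bullet> ((transpose E ** E) *v x) = (E *v x) \<bullet> ((E::real^'m^'n) *v x)"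
  by (metis dot_lmul_matrix matrix_vector_mul_assoc vector_transpose_matrix)

lemma nonneg_def_gram: "nonneg_def (transpose E ** (E::real^'m^'n))"
  unfolding nonneg_def_def inner_gram by simp

lemma gram_eq_0_iff: "transpose E ** E = 0 \<longleftrightarrow> (E::real^'m^'n) = 0"
proof
  assume "transpose E ** E = 0"
  then have "E *v x = 0" for x
    using inner_gram[of x E] by simp
  then show "E = 0" by (simp add: matrix_eq)
qed simp

lemma gram_mult_eq_0_iff: "transpose X ** X ** Z = 0 \<longleftrightarrow> (X::real^'m^'n) ** Z = 0"
proof
  assume "transpose X ** X ** Z = 0"
  moreover have "transpose (X ** Z) ** (X ** Z) = transpose Z ** (transpose X ** X ** Z)"
    by (simp add: matrix_transpose_mul matrix_mul_assoc)
  ultimately show "X ** Z = 0" by (simp add: gram_eq_0_iff)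
qed (simp add: matrix_mul_assoc[symmetric])

section \<open>The Moore--Penrose inverse\<close>

lemma orthogonal_projection_matrix_exists:
  fixes W :: "(real^'n) set"
  assumes "subspace W"
  obtains P :: "real^'n^'n"
  where "transpose P = P" "\<And>x. P *v x \<in> W" "\<And>x. x \<in> W \<Longrightarrow> P *v x = x"
proof -
  obtain B where B: "B \<subseteq> W" "pairwise orthogonal B" "\<And>x. x \<in> B \<Longrightarrow> norm x = 1"
    "independent B" "span B = W"
    using orthonormal_basis_subspace[OF assms] by metis
  have "finite B" using B(4) independent_imp_finite by blast
  define f where "f x = (\<Sum>b\<in>B. (b \<bullet> x) *\<^sub>R b)" for x :: "real^'n"
  have "linear f"
  proof -
    have "linear (\<lambda>x. (b \<bullet> x) *\<^sub>R b)" for b :: "real^'n"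
      by (rule linearI) (simp_all add: inner_add_right scaleR_add_left)
    then show ?thesis unfolding f_def by (intro linear_compose_sum) blast
  qed
  define P where "P = matrix f"
  have P: "P *v x = f x" for x
    unfolding P_def using matrix_vector_mul(2)[OF \<open>linear f\<close>] by metis
  have f_in_W: "f x \<in> W" for x
    unfolding f_def B(5)[symmetric] by (intro span_sum span_mul span_base)
  have B_orthonormal: "b \<bullet> b' = (if b = b' then 1 else 0)" if "b \<in> B" "b' \<in> B" for b b'
    using B(2,3) that by (auto simp: pairwise_def orthogonal_def norm_eq_1)
  have inner_f: "f x \<bullet> b = x \<bullet> b" if "b \<in> B" for b x
  proof -
    have "f x \<bullet> b = (\<Sum>b'\<in>B. (b' \<bullet> x) * (b' \<bullet> b))"
      by (simp add: f_def inner_sum_left)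
    also have "\<dots> = (\<Sum>b'\<in>B. if b' = b then b' \<bullet> x else 0)"
      by (rule sum.cong) (auto simp: B_orthonormal that)
    also have "\<dots> = x \<bullet> b" using \<open>finite B\<close> that by (simp add: inner_commute)
    finally show ?thesis .
  qed
  have f_fixes_W: "f x = x" if "x \<in> W" for x
  proof -
    have "x - f x \<in> span B" using that f_in_W[of x] B(5) span_diff[of x B "f x"] by simp
    then have "orthogonal (x - f x) (x - f x)"
      by (rule orthogonal_to_span) (simp add: orthogonal_def inner_diff_left inner_f)
    then show ?thesis by (simp add: orthogonal_def)
  qed
  have "x \<bullet> f y = f x \<bullet> y" for x y
    by (simp add: f_def inner_sum_right inner_sum_left mult.commute inner_commute)
  then have "transpose P = P"
    by (intro transpose_eq_if_self_adjoint) (simp add: P)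
  then show ?thesis using that P f_in_W f_fixes_W by auto
qed

definition penrose :: "real^'m^'n \<Rightarrow> real^'n^'m \<Rightarrow> bool" where
  "penrose X G \<longleftrightarrow> X ** G ** X = X \<and> G ** X ** G = G \<and>
     transpose (X ** G) = X ** G \<and> transpose (G ** X) = G ** X"

lemma penrose_unique:
  assumes "penrose X G1" "penrose X G2"
  shows "G1 = G2"
proof -
  from assms have a1: "X ** G1 ** X = X" and b1: "G1 ** X ** G1 = G1"
    and c1: "transpose (X ** G1) = X ** G1" and d1: "transpose (G1 ** X) = G1 ** X"
    and a2: "X ** G2 ** X = X" and b2: "G2 ** X ** G2 = G2"
    and c2: "transpose (X ** G2) = X ** G2" and d2: "transpose (G2 ** X) = G2 ** X"
    by (auto simp: penrose_def)
  have G1_eq: "G1 = G1 ** X ** G2"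
  proof -
    have "G1 = G1 ** transpose (X ** G1)" using b1 c1 by (simp add: matrix_mul_assoc)
    also have "\<dots> = G1 ** transpose G1 ** transpose X"
      by (simp add: matrix_transpose_mul matrix_mul_assoc)
    also have "\<dots> = G1 ** transpose G1 ** transpose (X ** G2 ** X)" using a2 by simp
    also have "\<dots> = G1 ** transpose G1 ** transpose X ** X ** G2"
      using c2 by (simp add: matrix_transpose_mul matrix_mul_assoc)
    also have "\<dots> = G1 ** transpose (X ** G1) ** X ** G2"
      by (simp add: matrix_transpose_mul matrix_mul_assoc)
    also have "\<dots> = G1 ** X ** G2" using b1 c1 by (simp add: matrix_mul_assoc)
    finally show ?thesis .
  qed
  have G2_eq: "G2 = G1 ** X ** G2"
  proof -
    have "G2 = transpose (G2 ** X) ** G2" using b2 d2 by simp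
    also have "\<dots> = transpose X ** transpose G2 ** G2" by (simp add: matrix_transpose_mul)
    also have "\<dots> = transpose (X ** G1 ** X) ** transpose G2 ** G2" using a1 by simp
    also have "\<dots> = G1 ** X ** transpose X ** transpose G2 ** G2"
      using d1 by (simp add: matrix_transpose_mul matrix_mul_assoc)
    also have "\<dots> = G1 ** X ** transpose (G2 ** X) ** G2"
      by (simp add: matrix_transpose_mul matrix_mul_assoc)
    also have "\<dots> = G1 ** X ** (G2 ** X ** G2)" using d2 by (simp add: matrix_mul_assoc)
    also have "\<dots> = G1 ** X ** G2" using b2 by simp
    finally show ?thesis .
  qed
  show ?thesis using G1_eq G2_eq by simp
qed

lemma penrose_transpose:
  assumes "penrose X G"
  shows "penrose (transpose X) (transpose G)"
proof -
  have "transpose X ** transpose G ** transpose X = transpose (X ** G ** X)"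
    and "transpose G ** transpose X ** transpose G = transpose (G ** X ** G)"
    and "transpose X ** transpose G = transpose (G ** X)"
    and "transpose G ** transpose X = transpose (X ** G)"
    by (simp_all add: matrix_transpose_mul matrix_mul_assoc)
  then show ?thesis using assms by (simp add: penrose_def)
qed

lemma row_space_inter_null_space:
  fixes X :: "real^'m^'n"
  assumes "X *v x = 0" "x \<in> range (\<lambda>y. transpose X *v y)"
  shows "x = 0"
proof -
  obtain y where "x = transpose X *v y" using assms(2) by blast
  then have "x \<bullet> x = y \<bullet> (X *v x)" using dot_lmul_matrix[of y X x] by simp
  then show ?thesis using assms(1) by simp
qed

lemma matrix_vector_mult_proj_row_space:
  fixes X :: "real^'m^'n"
  assumes "transpose P = P" "\<And>x. x \<in> range (\<lambda>y. transpose X *v y) \<Longrightarrow> P *v x = x"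
  shows "X *v (P *v x) = X *v x"
proof -
  have "y \<bullet> (X *v (x - P *v x)) = 0" for y
  proof -
    have "(transpose X *v y) \<bullet> (P *v x) = (transpose X *v y) \<bullet> x"
      using assms(2)[of "transpose X *v y"] inner_matrix_vector_symmetric[OF assms(1)] by simp
    then show ?thesis
      using dot_lmul_matrix[of y X] by (simp add: matrix_vector_mult_diff_distrib inner_diff_right)
  qed
  then have "X *v (x - P *v x) = 0" by (metis inner_eq_zero_iff)
  then show ?thesis by (simp add: matrix_vector_mult_diff_distrib)
qed

lemma penrose_exists: "\<exists>G. penrose X G"
proof -
  define V where "V = range (\<lambda>y. transpose X *v y)"
  define R where "R = range (\<lambda>x. X *v x)"
  have "subspace V" "subspace R"
    unfolding V_def R_def by (rule linear_subspace_image, simp, rule subspace_UNIV)+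
  obtain PV where PV: "transpose PV = PV" "\<And>x. PV *v x \<in> V" "\<And>x. x \<in> V \<Longrightarrow> PV *v x = x"
    using orthogonal_projection_matrix_exists[OF \<open>subspace V\<close>] by blast
  obtain PR where PR: "transpose PR = PR" "\<And>x. PR *v x \<in> R" "\<And>x. x \<in> R \<Longrightarrow> PR *v x = x"
    using orthogonal_projection_matrix_exists[OF \<open>subspace R\<close>] by blast
  have X_PV: "X *v (PV *v x) = X *v x" for x
    using matrix_vector_mult_proj_row_space[OF PV(1) PV(3)[unfolded V_def]] .
  have inj: "inj_on (\<lambda>x. X *v x) (span V)"
  proof (rule inj_onI)
    fix u v assume "u \<in> span V" "v \<in> span V" "X *v u = X *v v"
    moreover have "span V = V" using \<open>subspace V\<close> by (simp add: span_eq_iff)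
    ultimately have "u - v \<in> V" and "X *v (u - v) = 0"
      by (metis span_diff, simp add: matrix_vector_mult_diff_distrib)
    then have "u - v = 0" using row_space_inter_null_space[of X "u - v"] by (simp add: V_def)
    then show "u = v" by simp
  qed
  obtain g where "linear g" and g: "\<And>x. x \<in> span V \<Longrightarrow> g (X *v x) = x"
    using linear_inj_on_left_inverse[OF matrix_vector_mul_linear inj] by blast
  \<comment> \<open>G maps y to the preimage, inside the row space, of the projection of y to the column space.\<close>
  define G where "G = matrix (\<lambda>y. g (PR *v y))"
  have "linear (\<lambda>y. g (PR *v y))"
    using linear_compose[OF matrix_vector_mul_linear \<open>linear g\<close>] by (simp add: o_def)
  then have G: "G *v y = g (PR *v y)" for y
    unfolding G_def using matrix_vector_mul(2) by metis
  have PR_X: "PR *v (X *v x) = X *v x" for x using PR(3) by (simp add: R_def)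
  have g_X: "g (X *v x) = PV *v x" for x
    using g[OF span_base[OF PV(2)]] by (simp add: X_PV)
  have X_g_PR: "X *v g (PR *v y) = PR *v y" for y
  proof -
    obtain x where "PR *v y = X *v x" using PR(2)[of y] by (auto simp: R_def)
    then show ?thesis by (simp add: g_X X_PV)
  qed
  have PR_PR: "PR *v (PR *v y) = PR *v y" for y using PR(2,3) by simp
  have "X ** G ** X = X" "G ** X ** G = G" "X ** G = PR" "G ** X = PV"
    by (simp_all add: matrix_eq matrix_vector_mul_assoc[symmetric] G PR_X g_X X_PV X_g_PR PR_PR)
  then have "penrose X G" using PV(1) PR(1) by (simp add: penrose_def)
  then show ?thesis ..
qed

lemma penrose_mp_inverse: "penrose X (mp_inverse X)"
proof -
  obtain G where "penrose X G" using penrose_exists by blast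
  then have "\<exists>!G. penrose X G" using penrose_unique by blast
  then show ?thesis unfolding mp_inverse_def penrose_def[symmetric] by (rule theI')
qed

lemma mp_inverse_transpose: "mp_inverse (transpose X) = transpose (mp_inverse X)"
  by (rule penrose_unique[OF penrose_mp_inverse penrose_transpose[OF penrose_mp_inverse]])

section \<open>Orthogonal projections onto column spaces\<close>

lemma proj_mult_self: "proj X ** X = X"
proof -
  define S where "S = transpose X ** X"
  define G where "G = mp_inverse S"
  have "S ** G ** S = S" using penrose_mp_inverse[of S] by (simp add: G_def penrose_def)
  then have "S ** (G ** S - mat 1) = 0" by (simp add: matrix_diff_ldistrib matrix_mul_assoc)
  then have "X ** (G ** S - mat 1) = 0" by (simp add: S_def gram_mult_eq_0_iff)
  then show ?thesis by (simp add: proj_def matrix_diff_ldistrib matrix_mul_assoc S_def G_def)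
qed

lemma transpose_proj: "transpose (proj X) = proj X"
  by (simp add: proj_def matrix_transpose_mul matrix_mul_assoc mp_inverse_transpose[symmetric])

lemma transpose_proj_perp: "transpose (proj_perp X) = proj_perp X"
  by (simp add: proj_perp_def transpose_diff transpose_proj)

lemma transpose_mult_proj: "transpose X ** proj X = transpose X"
  using arg_cong[OF proj_mult_self[of X], of transpose]
  by (simp add: matrix_transpose_mul transpose_proj)

lemma transpose_mult_proj_perp: "transpose X ** proj_perp X = 0"
  by (simp add: proj_perp_def matrix_diff_ldistrib transpose_mult_proj)

lemma proj_mult_eq_0_iff: "proj X ** Z = 0 \<longleftrightarrow> transpose X ** Z = 0"
proof
  assume "proj X ** Z = 0"
  have "transpose X ** Z = transpose X ** proj X ** Z" by (simp add: transpose_mult_proj)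
  with \<open>proj X ** Z = 0\<close> show "transpose X ** Z = 0" by (simp add: matrix_mul_assoc[symmetric])
qed (simp add: proj_def matrix_mul_assoc[symmetric])

lemma proj_mult_proj:
  assumes "proj X ** Y = Y"
  shows "proj X ** proj Y = proj Y"
proof -
  have "proj X ** proj Y = (proj X ** Y) ** mp_inverse (transpose Y ** Y) ** transpose Y"
    unfolding proj_def[of Y] by (simp only: matrix_mul_assoc)
  also have "\<dots> = proj Y"
    unfolding assms proj_def[of Y] ..
  finally show ?thesis .
qed

lemma proj_idem: "proj X ** proj X = proj X"
  by (rule proj_mult_proj[OF proj_mult_self])

lemma proj_perp_mult_proj: "proj_perp X ** proj X = 0"
  by (simp add: proj_perp_def matrix_diff_rdistrib proj_idem)

lemma mult_mp_inverse_gram_eq_0_iff: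
  "Z ** K ** mp_inverse (transpose K ** K) = 0 \<longleftrightarrow> Z ** K = 0"
proof
  assume "Z ** K ** mp_inverse (transpose K ** K) = 0"
  have "Z ** K = Z ** (proj K ** K)" by (simp add: proj_mult_self)
  also have "\<dots> = Z ** K ** mp_inverse (transpose K ** K) ** transpose K ** K"
    by (simp add: proj_def matrix_mul_assoc)
  finally show "Z ** K = 0" using \<open>Z ** K ** mp_inverse (transpose K ** K) = 0\<close> by simp
qed simp

lemma proj_perp_mult_eq_0_iff_commute:
  fixes C :: "real^'p^'p" and K :: "real^'k^'p"
  assumes "transpose C = C"
  shows "proj_perp K ** C ** K = 0 \<longleftrightarrow> C ** proj K = proj K ** C"
proof
  assume "proj_perp K ** C ** K = 0"
  moreover have "proj_perp K ** C ** proj K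
      = proj_perp K ** C ** K ** mp_inverse (transpose K ** K) ** transpose K"
    by (simp add: proj_def matrix_mul_assoc)
  ultimately have "proj_perp K ** C ** proj K = 0" by simp
  then have right: "C ** proj K = proj K ** C ** proj K"
    by (simp add: proj_perp_def matrix_diff_rdistrib)
  then have "transpose (C ** proj K) = transpose (proj K ** C ** proj K)" by simp
  then have "proj K ** C = proj K ** C ** proj K"
    by (simp add: matrix_transpose_mul transpose_proj assms matrix_mul_assoc)
  with right show "C ** proj K = proj K ** C" by simp
next
  assume commute: "C ** proj K = proj K ** C"
  have "proj_perp K ** C ** K = proj_perp K ** (C ** proj K) ** K"
    by (simp add: matrix_mul_assoc[symmetric] proj_mult_self)
  then have "proj_perp K ** C ** K = proj_perp K ** proj K ** C ** K"
    by (simp add: commute matrix_mul_assoc)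
  then show "proj_perp K ** C ** K = 0" by (simp add: proj_perp_mult_proj)
qed

section \<open>Information matrices\<close>

lemma transpose_info_mat: "transpose (info_mat X1 X2) = info_mat X1 X2"
  by (simp add: info_mat_def matrix_transpose_mul transpose_proj_perp matrix_mul_assoc)

lemma info_mat_mult_right: "info_mat (X1 ** E) X2 = transpose E ** info_mat X1 X2 ** E"
  by (simp add: info_mat_def matrix_transpose_mul matrix_mul_assoc)

lemma info_mat_diff_eq_gram:
  fixes X1 :: "real^'a^'n" and X2 :: "real^'b^'n" and X3 :: "real^'c^'n"
  assumes "proj X2 ** X3 = X3"
  shows "info_mat X1 X3 - info_mat X1 X2
    = transpose (proj X2 ** proj_perp X3 ** X1) ** (proj X2 ** proj_perp X3 ** X1)"
proof -
  define D where "D = proj X2 - proj X3"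
  have RP: "proj X2 ** proj X3 = proj X3" by (rule proj_mult_proj[OF assms])
  have PR: "proj X3 ** proj X2 = proj X3"
    using arg_cong[OF RP, of transpose] by (simp add: matrix_transpose_mul transpose_proj)
  have D_eq: "proj X2 ** proj_perp X3 = D"
    by (simp add: proj_perp_def D_def matrix_diff_ldistrib RP)
  have D_proj: "transpose D ** D = D"
    by (simp add: D_def transpose_diff transpose_proj matrix_diff_ldistrib matrix_diff_rdistrib
        proj_idem RP PR)
  have "info_mat X1 X3 - info_mat X1 X2 = transpose X1 ** D ** X1"
    by (simp add: info_mat_def proj_perp_def D_def matrix_diff_ldistrib matrix_diff_rdistrib)
  also have "\<dots> = transpose X1 ** (transpose D ** D) ** X1" by (simp add: D_proj)
  also have "\<dots> = transpose (D ** X1) ** (D ** X1)"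
    by (simp add: matrix_transpose_mul matrix_mul_assoc)
  finally show ?thesis by (simp add: D_eq matrix_mul_assoc[symmetric])
qed

lemma info_mat_antimono:
  assumes "proj X2 ** X3 = X3"
  shows "loewner_le (info_mat X1 X2) (info_mat X1 X3)"
  unfolding loewner_le_def info_mat_diff_eq_gram[OF assms] by (rule nonneg_def_gram)

lemma info_mat_eq_iff:
  assumes "proj X2 ** X3 = X3"
  shows "info_mat X1 X2 = info_mat X1 X3 \<longleftrightarrow> transpose X2 ** proj_perp X3 ** X1 = 0"
proof -
  have "info_mat X1 X2 = info_mat X1 X3 \<longleftrightarrow> info_mat X1 X3 - info_mat X1 X2 = 0" by auto
  also have "\<dots> \<longleftrightarrow> proj X2 ** proj_perp X3 ** X1 = 0"
    by (simp only: info_mat_diff_eq_gram[OF assms] gram_eq_0_iff)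
  also have "\<dots> \<longleftrightarrow> transpose X2 ** proj_perp X3 ** X1 = 0"
    using proj_mult_eq_0_iff[of X2 "proj_perp X3 ** X1"] by (simp add: matrix_mul_assoc)
  finally show ?thesis .
qed

lemma transpose_hcat_mult_eq_0_iff:
  "transpose (hcat U V) ** Z = 0 \<longleftrightarrow> transpose U ** Z = 0 \<and> transpose V ** Z = 0"
proof -
  have "(transpose (hcat U V) ** Z) $ Inl a = (transpose U ** Z) $ a"
    and "(transpose (hcat U V) ** Z) $ Inr b = (transpose V ** Z) $ b" for a b
    by (simp_all add: matrix_matrix_mult_def transpose_def hcat_def vec_eq_iff)
  then show ?thesis by (simp add: vec_eq_iff[of _ 0] split_sum_all)
qed

lemma proj_hcat_mult_right:
  fixes U :: "real^'a^'n" and V :: "real^'b^'n"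
  shows "proj (hcat U V) ** V = V"
proof -
  define E :: "real^'b^('a + 'b)" where "E = (\<chi> s j. if s = Inr j then 1 else 0)"
  have "hcat U V ** E = V"
    by (simp add: E_def matrix_matrix_mult_def hcat_def vec_eq_iff if_distrib sum.If_cases
        cong: if_cong)
  moreover have "proj (hcat U V) ** (hcat U V ** E) = hcat U V ** E"
    by (simp add: matrix_mul_assoc proj_mult_self)
  ultimately show ?thesis by simp
qed

theorem lemma2:
  fixes A :: "real^'p^'n" and B :: "real^'q^'n" and K :: "real^'k^'p"
  shows "loewner_le (C_Kalpha A B K)
           (mp_inverse (transpose K ** K) ** transpose K ** C_alpha A B ** K
              ** mp_inverse (transpose K ** K))
         \<and> (C_Kalpha A B K =
              mp_inverse (transpose K ** K) ** transpose K ** C_alpha A B ** K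
                ** mp_inverse (transpose K ** K)
            \<longleftrightarrow> C_alpha A B ** proj K = proj K ** C_alpha A B)"
proof -
  define G where "G = mp_inverse (transpose K ** K)"
  define X1 where "X1 = A ** K ** G"
  define X2 where "X2 = hcat (A ** proj_perp K) B"
  have lhs: "C_Kalpha A B K = info_mat X1 X2"
    by (simp add: C_Kalpha_def Let_def G_def X1_def X2_def proj_perp_def proj_def)
  have "transpose G = G"
    by (simp add: G_def mp_inverse_transpose[symmetric] matrix_transpose_mul)
  then have rhs: "G ** transpose K ** C_alpha A B ** K ** G = info_mat X1 B"
    by (simp add: X1_def C_alpha_def info_mat_mult_right matrix_transpose_mul matrix_mul_assoc)
  have nested: "proj X2 ** B = B"
    unfolding X2_def by (rule proj_hcat_mult_right)
  have "transpose B ** (proj_perp B ** X1) = 0"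
    by (simp add: matrix_mul_assoc transpose_mult_proj_perp)
  then have "info_mat X1 X2 = info_mat X1 B
      \<longleftrightarrow> transpose (A ** proj_perp K) ** proj_perp B ** X1 = 0"
    using info_mat_eq_iff[OF nested, of X1]
    by (simp add: X2_def transpose_hcat_mult_eq_0_iff matrix_mul_assoc[symmetric])
  also have "\<dots> \<longleftrightarrow> proj_perp K ** C_alpha A B ** K ** G = 0"
    by (simp add: X1_def C_alpha_def info_mat_def matrix_transpose_mul transpose_proj_perp
        matrix_mul_assoc)
  also have "\<dots> \<longleftrightarrow> C_alpha A B ** proj K = proj K ** C_alpha A B"
    unfolding G_def mult_mp_inverse_gram_eq_0_iff
    by (rule proj_perp_mult_eq_0_iff_commute[OF transpose_info_mat[folded C_alpha_def]])
  finally show ?thesis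
    using info_mat_antimono[OF nested, of X1] lhs rhs by (simp add: G_def)
qed

end
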